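(* Let $G$ be a multiplicative monoid with identity, let $N$ be a $G$-graded near-ring and let $P$ be a graded weakly prime ideal of $N$ with $P^2=\{0\}$. If $I$ is a graded ideal of $N$ with $I^2\subseteq P$, then $I^2=\{0\}$.
   Context: A near-ring $(N,+,\cdot)$ is a set with two binary operations such that $(N,+)$ is a group (not necessarily abelian), $(N,\cdot)$ is a semigroup, and $(a+b)y = ay+by$ for all $a,b,y\in N$. For a multiplicative monoid $G$ with identity, $N$ is a $G$-graded near-ring if there is a family $\{N_\sigma\}_{\sigma\in G}$ of additive normal subgroups of $N$ with $N=\bigoplus_{\sigma\in G}N_\sigma$ and $N_\sigma N_\tau\subseteq N_{\sigma\tau}$. An ideal $P$ of $N$ is graded if $P=\bigoplus_{\sigma}(P\cap N_\sigma)$. For ideals $I,J$, $IJ$ denotes their product and $I^2=II$. A graded ideal $P$ is graded weakly prime if for all graded ideals $I,J$ with $\{0\}\neq IJ\subseteq P$, either $I\subseteq P$ or $J\subseteq P$. *)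

theory Defs
  imports Main
begin

text \<open>Near-rings are rendered in the type-class idiom: the near-ring N is the whole
  type 'a, whose addition is a (not necessarily abelian) group (class group_add)
  and whose multiplication is a semigroup (class semigroup_mult); right
  distributivity is an explicit hypothesis.\<close>

definition near_ring_right_distrib :: "'a::{group_add, semigroup_mult} itself \<Rightarrow> bool" where
  "near_ring_right_distrib _ \<longleftrightarrow> (\<forall>a b y :: 'a. (a + b) * y = a * y + b * y)"

definition add_subgroup :: "'a::group_add set \<Rightarrow> bool" where
  "add_subgroup H \<longleftrightarrow> 0 \<in> H \<and> (\<forall>x\<in>H. \<forall>y\<in>H. x + y \<in> H) \<and> (\<forall>x\<in>H. - x \<in> H)"

definition normal_add_subgroup :: "'a::group_add set \<Rightarrow> bool" where
  "normal_add_subgroup H \<longleftrightarrow> add_subgroup H \<and> (\<forall>x\<in>H. \<forall>a. a + x + - a \<in> H)"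

definition gen_add :: "'a::group_add set \<Rightarrow> 'a set" where
  "gen_add S = \<Inter>{K. add_subgroup K \<and> S \<subseteq> K}"

definition internal_direct_sum :: "'a::group_add set \<Rightarrow> ('g \<Rightarrow> 'a set) \<Rightarrow> bool" where
  "internal_direct_sum H F \<longleftrightarrow>
     (\<forall>\<sigma>. add_subgroup (F \<sigma>)) \<and>
     H = gen_add (\<Union>\<sigma>. F \<sigma>) \<and>
     (\<forall>\<sigma>. F \<sigma> \<inter> gen_add (\<Union>\<tau>\<in>- {\<sigma>}. F \<tau>) = {0})"

definition graded_near_ring :: "('g::monoid_mult \<Rightarrow> 'a::{group_add, semigroup_mult} set) \<Rightarrow> bool" where
  "graded_near_ring Ns \<longleftrightarrow>
     (\<forall>\<sigma>. normal_add_subgroup (Ns \<sigma>)) \<and>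
     internal_direct_sum (UNIV :: 'a set) Ns \<and>
     (\<forall>\<sigma> \<tau>. \<forall>x\<in>Ns \<sigma>. \<forall>y\<in>Ns \<tau>. x * y \<in> Ns (\<sigma> * \<tau>))"

definition nr_ideal :: "'a::{group_add, semigroup_mult} set \<Rightarrow> bool" where
  "nr_ideal I \<longleftrightarrow> normal_add_subgroup I \<and>
     (\<forall>i\<in>I. \<forall>n. i * n \<in> I) \<and>
     (\<forall>i\<in>I. \<forall>n n'. n * (n' + i) - n * n' \<in> I)"

definition graded_ideal :: "('g \<Rightarrow> 'a::{group_add, semigroup_mult} set) \<Rightarrow> 'a set \<Rightarrow> bool" where
  "graded_ideal Ns P \<longleftrightarrow> nr_ideal P \<and> internal_direct_sum P (\<lambda>\<sigma>. P \<inter> Ns \<sigma>)"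

definition ideal_prod :: "'a::times set \<Rightarrow> 'a set \<Rightarrow> 'a set" where
  "ideal_prod I J = {i * j | i j. i \<in> I \<and> j \<in> J}"

definition graded_weakly_prime :: "('g \<Rightarrow> 'a::{group_add, semigroup_mult} set) \<Rightarrow> 'a set \<Rightarrow> bool" where
  "graded_weakly_prime Ns P \<longleftrightarrow> graded_ideal Ns P \<and>
     (\<forall>I J. graded_ideal Ns I \<longrightarrow> graded_ideal Ns J \<longrightarrow>
        ideal_prod I J \<noteq> {0} \<longrightarrow> ideal_prod I J \<subseteq> P \<longrightarrow> I \<subseteq> P \<or> J \<subseteq> P)"

end

theory Submission
  imports Defs
begin

lemma ideal_prod_mono:
  assumes "I \<subseteq> I'" and "J \<subseteq> J'"
  shows "ideal_prod I J \<subseteq> ideal_prod I' J'"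
  using assms unfolding ideal_prod_def by blast

lemma zero_mem_graded_ideal:
  assumes "graded_ideal Ns I"
  shows "0 \<in> I"
  using assms
  unfolding graded_ideal_def nr_ideal_def normal_add_subgroup_def add_subgroup_def
  by blast

lemma ideal_prod_eq_zero_if_subset_zero:
  assumes "0 \<in> I" and "0 \<in> J" and "ideal_prod I J \<subseteq> {0}"
  shows "ideal_prod I J = {0}"
proof -
  have "0 * 0 \<in> ideal_prod I J"
    using assms(1,2) unfolding ideal_prod_def by blast
  with assms(3) show ?thesis by auto
qed

lemma graded_weakly_prime_square_subset:
  assumes "graded_weakly_prime Ns P" and "graded_ideal Ns I"
    and "ideal_prod I I \<subseteq> P" and "ideal_prod I I \<noteq> {0}"
  shows "I \<subseteq> P"
  using assms unfolding graded_weakly_prime_def by blast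

theorem theorem6:
  fixes Ns :: "'g::monoid_mult \<Rightarrow> 'a::{group_add, semigroup_mult} set"
    and P I :: "'a set"
  assumes "near_ring_right_distrib TYPE('a)"
    and "graded_near_ring Ns"
    and "graded_weakly_prime Ns P"
    and "ideal_prod P P = {0}"
    and "graded_ideal Ns I"
    and "ideal_prod I I \<subseteq> P"
  shows "ideal_prod I I = {0}"
proof (rule ccontr)
  assume nonzero: "ideal_prod I I \<noteq> {0}"
  have "I \<subseteq> P"
    using graded_weakly_prime_square_subset assms(3,5,6) nonzero .
  then have "ideal_prod I I \<subseteq> ideal_prod P P"
    using ideal_prod_mono by blast
  with assms(4) have "ideal_prod I I \<subseteq> {0}"
    by simp
  moreover have "0 \<in> I"
    using assms(5) by (rule zero_mem_graded_ideal)
  ultimately have "ideal_prod I I = {0}"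
    using ideal_prod_eq_zero_if_subset_zero by blast
  with nonzero show False ..
qed

end
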